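(* Let $R$ be a ring and let $a\in R$ be regular. If (1) the right $R$-module $aR/ar(a^2)$ is projective and (2) $ar(a^2)\cong R/\big(r(a)+aR\big)$ as right $R$-modules, then $a$ is special clean, i.e., there exists an idempotent $e\in R$ such that $a-e$ is a unit of $R$ and $aR\cap eR=0$.
   Context: All rings are associative with identity; modules are right modules. An element $x\in R$ is regular if $x=xyx$ for some $y\in R$. For $x\in R$, $r(x)=\{y\in R: xy=0\}$, and $ar(a^2)=\{ay: y\in r(a^2)\}$. *)

theory Defs
  imports Main
begin

record ('r, 'm) rmod =
  rcarrier :: "'m set"
  radd :: "'m \<Rightarrow> 'm \<Rightarrow> 'm"
  rzero :: 'm
  rsmul :: "'m \<Rightarrow> 'r \<Rightarrow> 'm"

definition rmodule :: "('r::ring_1, 'm) rmod \<Rightarrow> bool" where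
  "rmodule M \<longleftrightarrow>
     rzero M \<in> rcarrier M \<and>
     (\<forall>x\<in>rcarrier M. \<forall>y\<in>rcarrier M. radd M x y \<in> rcarrier M) \<and>
     (\<forall>x\<in>rcarrier M. \<forall>y\<in>rcarrier M. \<forall>z\<in>rcarrier M.
        radd M (radd M x y) z = radd M x (radd M y z)) \<and>
     (\<forall>x\<in>rcarrier M. \<forall>y\<in>rcarrier M. radd M x y = radd M y x) \<and>
     (\<forall>x\<in>rcarrier M. radd M (rzero M) x = x) \<and>
     (\<forall>x\<in>rcarrier M. \<exists>y\<in>rcarrier M. radd M x y = rzero M) \<and>
     (\<forall>x\<in>rcarrier M. \<forall>r. rsmul M x r \<in> rcarrier M) \<and>
     (\<forall>x\<in>rcarrier M. \<forall>y\<in>rcarrier M. \<forall>r.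
        rsmul M (radd M x y) r = radd M (rsmul M x r) (rsmul M y r)) \<and>
     (\<forall>x\<in>rcarrier M. \<forall>r s. rsmul M x (r + s) = radd M (rsmul M x r) (rsmul M x s)) \<and>
     (\<forall>x\<in>rcarrier M. \<forall>r s. rsmul M x (r * s) = rsmul M (rsmul M x r) s) \<and>
     (\<forall>x\<in>rcarrier M. rsmul M x 1 = x)"

definition rhom :: "('r::ring_1, 'm) rmod \<Rightarrow> ('r, 'n) rmod \<Rightarrow> ('m \<Rightarrow> 'n) \<Rightarrow> bool" where
  "rhom M N f \<longleftrightarrow>
     (\<forall>x\<in>rcarrier M. f x \<in> rcarrier N) \<and>
     (\<forall>x\<in>rcarrier M. \<forall>y\<in>rcarrier M. f (radd M x y) = radd N (f x) (f y)) \<and>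
     (\<forall>x\<in>rcarrier M. \<forall>r. f (rsmul M x r) = rsmul N (f x) r)"

definition riso :: "('r::ring_1, 'm) rmod \<Rightarrow> ('r, 'n) rmod \<Rightarrow> ('m \<Rightarrow> 'n) \<Rightarrow> bool" where
  "riso M N f \<longleftrightarrow> rhom M N f \<and> bij_betw f (rcarrier M) (rcarrier N)"

definition rmod_isomorphic :: "('r::ring_1, 'm) rmod \<Rightarrow> ('r, 'n) rmod \<Rightarrow> bool" where
  "rmod_isomorphic M N \<longleftrightarrow> (\<exists>f. riso M N f)"

text \<open>The test modules M (the ones mapping
  onto N) range over right modules whose elements are of type 'b \<Rightarrow> 'r; this type
  contains the free module R^(P) on the carrier of P (finitely supported functions),
  so the notion coincides with the usual one.\<close>

definition rprojective :: "('r::ring_1, 'b) rmod \<Rightarrow> bool" where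
  "rprojective P \<longleftrightarrow> rmodule P \<and>
     (\<forall>(M :: ('r, 'b \<Rightarrow> 'r) rmod) (N :: ('r, 'b) rmod) g f.
        rmodule M \<and> rmodule N \<and> rhom M N g \<and> g ` rcarrier M = rcarrier N \<and> rhom P N f
        \<longrightarrow> (\<exists>h. rhom P M h \<and> (\<forall>x\<in>rcarrier P. g (h x) = f x)))"

definition sub_rmod :: "'r::ring_1 set \<Rightarrow> ('r, 'r) rmod" where
  "sub_rmod A = \<lparr>rcarrier = A, radd = (+), rzero = 0, rsmul = (*)\<rparr>"

definition coset :: "'r::ring_1 \<Rightarrow> 'r set \<Rightarrow> 'r set" where
  "coset x B = {x + b | b. b \<in> B}"

definition quot_rmod :: "'r::ring_1 set \<Rightarrow> 'r set \<Rightarrow> ('r, 'r set) rmod" where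
  "quot_rmod A B = \<lparr>rcarrier = {coset x B | x. x \<in> A},
      radd = (\<lambda>X Y. {x + y | x y. x \<in> X \<and> y \<in> Y}),
      rzero = B,
      rsmul = (\<lambda>X r. {x * r + b | x b. x \<in> X \<and> b \<in> B})\<rparr>"

definition rann :: "'r::ring_1 \<Rightarrow> 'r set" where
  "rann x = {y. x * y = 0}"

definition principal_right :: "'r::ring_1 \<Rightarrow> 'r set" where
  "principal_right x = {x * y | y. True}"

definition a_rann_sq :: "'r::ring_1 \<Rightarrow> 'r set" where
  "a_rann_sq a = {a * y | y. y \<in> rann (a * a)}"

definition set_plus_r :: "'r::ring_1 set \<Rightarrow> 'r set \<Rightarrow> 'r set" where
  "set_plus_r A B = {x + y | x y. x \<in> A \<and> y \<in> B}"

definition regular_elem :: "'r::ring_1 \<Rightarrow> bool" where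
  "regular_elem x \<longleftrightarrow> (\<exists>y. x = x * y * x)"

definition is_unit_r :: "'r::ring_1 \<Rightarrow> bool" where
  "is_unit_r u \<longleftrightarrow> (\<exists>v. u * v = 1 \<and> v * u = 1)"

definition special_clean :: "'r::ring_1 \<Rightarrow> bool" where
  "special_clean a \<longleftrightarrow> (\<exists>e. e * e = e \<and> is_unit_r (a - e) \<and>
      principal_right a \<inter> principal_right e = {0})"

end

theory Submission
  imports Defs
begin

text \<open>Let x be an inner inverse of a and f = ax, so that fR = aR and K = ar(a^2) = {z \<in> fR. az = 0}.
  Projectivity of fR/K splits the projection fR \<rightarrow> fR/K, hence K = kR for an idempotent k
  with kf = k. The isomorphism K \<cong> R/S, S = r(a) + aR, is left multiplication by some t
  modulo S, and the preimage s of 1 + S satisfies st = k, sS = 0 and 1 - ts \<in> S; replacing t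
  by (1 - f)t also gives ft = 0. Then e = 1 - f - t is an idempotent with aR \<inter> eR = 0, and
  a - e is a unit: it is injective because r(a) \<inter> r(e) = 0, and surjective because e maps
  r(a) onto (1 - f)R.\<close>

definition rideal :: "'r::ring_1 set \<Rightarrow> bool" where
  "rideal B \<longleftrightarrow> 0 \<in> B \<and> (\<forall>x\<in>B. \<forall>y\<in>B. x + y \<in> B) \<and> (\<forall>x\<in>B. - x \<in> B)
     \<and> (\<forall>x\<in>B. \<forall>r. x * r \<in> B)"

lemma rideal_zero: "rideal B \<Longrightarrow> 0 \<in> B"
  and rideal_add: "rideal B \<Longrightarrow> x \<in> B \<Longrightarrow> y \<in> B \<Longrightarrow> x + y \<in> B"
  and rideal_uminus: "rideal B \<Longrightarrow> x \<in> B \<Longrightarrow> - x \<in> B"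
  and rideal_mult_right: "rideal B \<Longrightarrow> x \<in> B \<Longrightarrow> x * r \<in> B"
  unfolding rideal_def by blast+

lemma rideal_diff: "rideal B \<Longrightarrow> x \<in> B \<Longrightarrow> y \<in> B \<Longrightarrow> x - y \<in> B"
  by (metis diff_conv_add_uminus rideal_add rideal_uminus)

lemma rideal_rann: "rideal (rann a)"
  unfolding rideal_def rann_def by (auto simp: distrib_left simp flip: mult.assoc)

lemma rideal_principal_right: "rideal (principal_right a)"
  unfolding rideal_def principal_right_def
  by (auto simp flip: distrib_left; metis minus_mult_right mult.assoc mult_zero_right)

lemma rideal_set_plus_r:
  assumes "rideal A" "rideal B" shows "rideal (set_plus_r A B)"
  unfolding rideal_def set_plus_r_def
proof (intro conjI ballI allI)
  show "0 \<in> {x + y |x y. x \<in> A \<and> y \<in> B}"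
    using assms by (force intro: rideal_zero)
next
  fix u v r assume "u \<in> {x + y |x y. x \<in> A \<and> y \<in> B}" "v \<in> {x + y |x y. x \<in> A \<and> y \<in> B}"
  then obtain x y x' y' where "u = x + y" "v = x' + y'" "x \<in> A" "y \<in> B" "x' \<in> A" "y' \<in> B"
    by blast
  moreover have "u + v = (x + x') + (y + y')" "- u = - x + - y" "u * r = x * r + y * r"
    using calculation by (simp_all add: algebra_simps)
  ultimately show "u + v \<in> {x + y |x y. x \<in> A \<and> y \<in> B}"
    and "- u \<in> {x + y |x y. x \<in> A \<and> y \<in> B}"
    and "u * r \<in> {x + y |x y. x \<in> A \<and> y \<in> B}"
    using assms by (blast intro: rideal_add rideal_uminus rideal_mult_right)+
qed

lemma a_rann_sq_eq_principal_right_inter: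
  "a_rann_sq a = principal_right a \<inter> rann a"
  unfolding a_rann_sq_def principal_right_def rann_def by (auto simp: mult.assoc)

lemma rideal_a_rann_sq: "rideal (a_rann_sq a)"
  unfolding a_rann_sq_eq_principal_right_inter rideal_def
  using rideal_principal_right rideal_rann unfolding rideal_def by blast

lemma principal_right_eq_of_inner_inverse:
  "a * x * a = a \<Longrightarrow> principal_right (a * x) = principal_right a"
  unfolding principal_right_def by (metis mult.assoc)

lemma a_rann_sq_eq_of_inner_inverse:
  assumes "a * x * a = a" shows "a_rann_sq a = {z. a * x * z = z \<and> a * z = 0}"
  unfolding a_rann_sq_eq_principal_right_inter principal_right_eq_of_inner_inverse[OF assms, symmetric]
  unfolding principal_right_def rann_def using assms by (auto simp flip: mult.assoc) (metis mult.assoc)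

lemma set_plus_r_subset_left: "0 \<in> B \<Longrightarrow> A \<subseteq> set_plus_r A B"
  and set_plus_r_subset_right: "0 \<in> A \<Longrightarrow> B \<subseteq> set_plus_r A B"
  unfolding set_plus_r_def by force+

lemma coset_eq_iff:
  assumes "rideal B" shows "coset x B = coset y B \<longleftrightarrow> x - y \<in> B"
proof
  assume "coset x B = coset y B"
  moreover have "x \<in> coset x B"
    unfolding coset_def using rideal_zero[OF assms] by force
  ultimately obtain b where "b \<in> B" "x = y + b" unfolding coset_def by auto
  then show "x - y \<in> B" by simp
next
  assume xy: "x - y \<in> B"
  have "x + b \<in> coset y B" if "b \<in> B" for b
    using rideal_add[OF assms xy that] unfolding coset_def by (force simp: algebra_simps)
  moreover have "y + b \<in> coset x B" if "b \<in> B" for b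
    using rideal_add[OF assms rideal_uminus[OF assms xy] that] unfolding coset_def
    by (force simp: algebra_simps)
  ultimately show "coset x B = coset y B" unfolding coset_def by blast
qed

lemma quot_rmod_add_coset:
  assumes "rideal B" shows "radd (quot_rmod A B) (coset x B) (coset y B) = coset (x + y) B"
proof (rule set_eqI)
  fix z
  have "(\<exists>b b'. b \<in> B \<and> b' \<in> B \<and> z = (x + b) + (y + b')) \<longleftrightarrow> (\<exists>b. b \<in> B \<and> z = (x + y) + b)"
  proof
    assume "\<exists>b b'. b \<in> B \<and> b' \<in> B \<and> z = (x + b) + (y + b')"
    then obtain b b' where "b \<in> B" "b' \<in> B" "z = (x + y) + (b + b')"
      by (auto simp: algebra_simps)
    then show "\<exists>b. b \<in> B \<and> z = (x + y) + b" using rideal_add[OF assms] by blast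
  next
    assume "\<exists>b. b \<in> B \<and> z = (x + y) + b"
    then show "\<exists>b b'. b \<in> B \<and> b' \<in> B \<and> z = (x + b) + (y + b')"
      using rideal_zero[OF assms] by (metis add.assoc add.commute add_0)
  qed
  then show "z \<in> radd (quot_rmod A B) (coset x B) (coset y B) \<longleftrightarrow> z \<in> coset (x + y) B"
    unfolding quot_rmod_def coset_def by auto
qed

lemma quot_rmod_smul_coset:
  assumes "rideal B" shows "rsmul (quot_rmod A B) (coset x B) r = coset (x * r) B"
proof (rule set_eqI)
  fix z
  have "(\<exists>b b'. b \<in> B \<and> b' \<in> B \<and> z = (x + b) * r + b') \<longleftrightarrow> (\<exists>b. b \<in> B \<and> z = x * r + b)"
  proof
    assume "\<exists>b b'. b \<in> B \<and> b' \<in> B \<and> z = (x + b) * r + b'"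
    then obtain b b' where "b \<in> B" "b' \<in> B" "z = x * r + (b * r + b')"
      by (auto simp: algebra_simps)
    then show "\<exists>b. b \<in> B \<and> z = x * r + b" using rideal_add rideal_mult_right assms by blast
  next
    assume "\<exists>b. b \<in> B \<and> z = x * r + b"
    then show "\<exists>b b'. b \<in> B \<and> b' \<in> B \<and> z = (x + b) * r + b'"
      using rideal_zero[OF assms] by (metis add_0_right)
  qed
  then show "z \<in> rsmul (quot_rmod A B) (coset x B) r \<longleftrightarrow> z \<in> coset (x * r) B"
    unfolding quot_rmod_def coset_def by auto
qed

text \<open>Test modules in rprojective have elements of type 'b \<Rightarrow> 'r, so the right ideal A enters
  as the module of constant functions with values in A.\<close>

definition const_rmod :: "'r::ring_1 set \<Rightarrow> ('r, 'b \<Rightarrow> 'r) rmod" where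
  "const_rmod A = \<lparr>rcarrier = {(\<lambda>_. z) | z. z \<in> A}, radd = (\<lambda>F G i. F i + G i),
     rzero = (\<lambda>_. 0), rsmul = (\<lambda>F r i. F i * r)\<rparr>"

lemma rmodule_const_rmod: "rideal A \<Longrightarrow> rmodule (const_rmod A)"
  unfolding rmodule_def const_rmod_def rideal_def
  by (auto simp: algebra_simps; metis add.right_inverse)

lemma rprojective_quot_rmod_splits:
  fixes A B :: "'r::ring_1 set"
  assumes A: "rideal A" and B: "rideal B" and proj: "rprojective (quot_rmod A B)"
  obtains h where "rhom (quot_rmod A B) (sub_rmod A) h"
    and "\<And>x. x \<in> A \<Longrightarrow> coset (h (coset x B)) B = coset x B"
proof -
  let ?P = "quot_rmod A B" and ?M = "const_rmod A :: ('r, 'r set \<Rightarrow> 'r) rmod"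
  define g where "g F = coset (F {}) B" for F :: "'r set \<Rightarrow> 'r"
  have carM: "rcarrier ?M = {(\<lambda>_. z) | z. z \<in> A}" unfolding const_rmod_def by simp
  have carP: "rcarrier ?P = {coset z B | z. z \<in> A}" unfolding quot_rmod_def by simp
  have "rhom ?M ?P g"
    unfolding rhom_def carM
  proof (intro conjI ballI allI)
    fix F G :: "'r set \<Rightarrow> 'r" and r assume "F \<in> {(\<lambda>_. z) | z. z \<in> A}" "G \<in> {(\<lambda>_. z) | z. z \<in> A}"
    then obtain y z where "F = (\<lambda>_. y)" "y \<in> A" "G = (\<lambda>_. z)" by blast
    then show "g F \<in> rcarrier ?P" "g (radd ?M F G) = radd ?P (g F) (g G)"
      "g (rsmul ?M F r) = rsmul ?P (g F) r"
      by (auto simp: carP g_def const_rmod_def quot_rmod_add_coset[OF B] quot_rmod_smul_coset[OF B])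
  qed
  moreover have "g ` rcarrier ?M = rcarrier ?P"
    unfolding carM carP g_def by (auto simp: image_def)
  moreover have "rhom ?P ?P id" unfolding rhom_def by simp
  moreover have "rmodule ?P" "rmodule ?M"
    using proj rmodule_const_rmod[OF A] unfolding rprojective_def by blast+
  ultimately have "\<exists>h. rhom ?P ?M h \<and> (\<forall>X\<in>rcarrier ?P. g (h X) = id X)"
    using proj unfolding rprojective_def by blast
  then obtain h where h: "rhom ?P ?M h" and gh: "\<And>X. X \<in> rcarrier ?P \<Longrightarrow> g (h X) = X"
    by auto
  have hX: "\<exists>z\<in>A. h X = (\<lambda>_. z)" if "X \<in> rcarrier ?P" for X
    using h that unfolding rhom_def carM by blast
  have "rhom ?P (sub_rmod A) (\<lambda>X. h X {})"
    unfolding rhom_def sub_rmod_def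
  proof (intro conjI ballI allI; simp)
    fix X Y r assume X: "X \<in> rcarrier ?P" and Y: "Y \<in> rcarrier ?P"
    show "h X {} \<in> A" using hX[OF X] by auto
    show "h (radd ?P X Y) {} = h X {} + h Y {}" "h (rsmul ?P X r) {} = h X {} * r"
      using h X Y unfolding rhom_def const_rmod_def by simp_all
  qed
  moreover have "coset (h (coset x B) {}) B = coset x B" if "x \<in> A" for x
    using gh[of "coset x B"] that carP unfolding g_def by blast
  ultimately show ?thesis using that by blast
qed

lemma idempotent_generator_of_rprojective_quot:
  fixes f :: "'r::ring_1"
  assumes ff: "f * f = f" and B: "rideal B" and Bf: "B \<subseteq> principal_right f"
    and proj: "rprojective (quot_rmod (principal_right f) B)"
  obtains k where "k \<in> B" "\<And>z. z \<in> B \<Longrightarrow> k * z = z" "k * f = k"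
proof -
  let ?A = "principal_right f"
  have f_left: "f * z = z" if "z \<in> B" for z
    using that Bf ff unfolding principal_right_def by (auto simp flip: mult.assoc)
  obtain h where h: "rhom (quot_rmod ?A B) (sub_rmod ?A) h"
    and hB: "\<And>x. x \<in> ?A \<Longrightarrow> coset (h (coset x B)) B = coset x B"
    using rprojective_quot_rmod_splits[OF rideal_principal_right B proj] by blast
  have fA: "f \<in> ?A" unfolding principal_right_def by (rule CollectI, rule exI[of _ 1]) simp
  define c where "c = h (coset f B)"
  \<comment> \<open>h splits the projection, so c spans a complement of B in fR and f - c is the
    B-component of f\<close>
  have hc: "h (coset (f * r) B) = c * r" for r
  proof -
    have "coset f B \<in> rcarrier (quot_rmod ?A B)" using fA unfolding quot_rmod_def by auto
    then have "h (rsmul (quot_rmod ?A B) (coset f B) r) = c * r"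
      using h unfolding rhom_def sub_rmod_def c_def by simp
    then show ?thesis by (simp add: quot_rmod_smul_coset[OF B])
  qed
  have "c - f \<in> B" using hB[OF fA] coset_eq_iff[OF B] unfolding c_def by blast
  then have "f - c \<in> B" using rideal_uminus[OF B] by force
  moreover have "(f - c) * z = z" if z: "z \<in> B" for z
  proof -
    have "coset (f * z) B = coset (f * 0) B" using z f_left coset_eq_iff[OF B] by simp
    then have "c * z = 0" using hc by (metis mult_zero_right)
    then show ?thesis using f_left[OF z] by (simp add: algebra_simps)
  qed
  moreover have "(f - c) * f = f - c" using hc[of f] ff by (simp add: algebra_simps c_def)
  ultimately show ?thesis using that by blast
qed

lemma generators_of_iso_quot_univ:
  fixes K S :: "'r::ring_1 set"
  assumes K: "rideal K" and S: "rideal S" and kK: "k \<in> K" and k_left: "\<And>z. z \<in> K \<Longrightarrow> k * z = z"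
    and iso: "rmod_isomorphic (sub_rmod K) (quot_rmod UNIV S)"
  obtains s t where "t * k = t" "s * t = k" "\<And>w. w \<in> S \<Longrightarrow> s * w = 0" "1 - t * s \<in> S"
proof -
  let ?Q = "quot_rmod (UNIV :: 'r set) S"
  obtain \<phi> where hom: "rhom (sub_rmod K) ?Q \<phi>" and bij: "bij_betw \<phi> K (rcarrier ?Q)"
    using iso unfolding rmod_isomorphic_def riso_def sub_rmod_def by auto
  have carQ: "rcarrier ?Q = {coset y S | y. True}" unfolding quot_rmod_def by simp
  obtain t0 where t0: "\<phi> k = coset t0 S"
    using hom kK carQ unfolding rhom_def sub_rmod_def by auto
  define t where "t = t0 * k"
  have \<phi>_eq: "\<phi> z = coset (t * z) S" if z: "z \<in> K" for z
  proof -
    have "\<phi> z = \<phi> (k * z)" using k_left[OF z] by simp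
    also have "\<dots> = rsmul ?Q (\<phi> k) z" using hom kK unfolding rhom_def sub_rmod_def by auto
    finally show ?thesis using t0 k_left[OF z] by (simp add: quot_rmod_smul_coset[OF S] t_def mult.assoc)
  qed
  have t_inj: "z = 0" if "z \<in> K" "t * z \<in> S" for z
  proof -
    have "\<phi> z = \<phi> 0"
      using that \<phi>_eq rideal_zero[OF K] coset_eq_iff[OF S] by simp
    then show ?thesis using bij that rideal_zero[OF K] unfolding bij_betw_def inj_on_def by blast
  qed
  obtain s where sK: "s \<in> K" and "\<phi> s = coset 1 S"
    using bij carQ unfolding bij_betw_def by (metis (mono_tags, lifting) imageE mem_Collect_eq)
  then have "t * s - 1 \<in> S" using \<phi>_eq coset_eq_iff[OF S] by simp
  then have one: "1 - t * s \<in> S" using rideal_uminus[OF S] by force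
  have one_right: "y - t * (s * y) \<in> S" for y
    using rideal_mult_right[OF S one, of y] by (simp add: algebra_simps)
  have "t * k = t" unfolding t_def using k_left[OF kK] by (simp add: mult.assoc)
  moreover have "s * w = 0" if w: "w \<in> S" for w
    using t_inj rideal_mult_right[OF K sK] rideal_diff[OF S w one_right[of w]] by simp
  moreover have "s * t = k"
  proof -
    have "k - s * t \<in> K" using rideal_diff[OF K kK rideal_mult_right[OF K sK]] .
    moreover have "t * (k - s * t) \<in> S" using one_right[of t] \<open>t * k = t\<close> by (simp add: algebra_simps)
    ultimately have "k - s * t = 0" by (rule t_inj)
    then show ?thesis by simp
  qed
  ultimately show ?thesis using that one by blast
qed

lemma is_unit_rI:
  assumes "u * v = 1" and "\<And>y. u * y = 0 \<Longrightarrow> y = 0"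
  shows "is_unit_r u"
proof -
  have "u * (v * u - 1) = 0" using assms(1) by (simp add: algebra_simps flip: mult.assoc)
  then have "v * u = 1" using assms(2) by fastforce
  then show ?thesis using assms(1) unfolding is_unit_r_def by blast
qed

locale special_clean_data =
  fixes a f k s t :: "'r::ring_1"
  assumes f_idem: "f * f = f" and f_a: "f * a = a" and f_in: "f \<in> principal_right a"
    and k_rann: "a * k = 0" and f_k: "f * k = k" and k_f: "k * f = k"
    and k_left: "\<And>z. f * z = z \<Longrightarrow> a * z = 0 \<Longrightarrow> k * z = z"
    and f_t: "f * t = 0" and t_k: "t * k = t"
    and s_t: "s * t = k" and s_a: "s * a = 0" and s_rann: "\<And>y. a * y = 0 \<Longrightarrow> s * y = 0"
    and one_minus_ts: "1 - t * s \<in> set_plus_r (rann a) (principal_right a)"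
begin

definition e where "e = 1 - f - t"

lemma f_a_mult: "f * (a * y) = a * y"
  by (simp add: f_a flip: mult.assoc)

lemma t_f: "t * f = t"
  by (metis k_f mult.assoc t_k)

lemma f_e: "f * e = 0"
  unfolding e_def by (simp add: algebra_simps f_idem f_t)

lemma e_f: "e * f = - t"
  unfolding e_def by (simp add: algebra_simps f_idem t_f)

lemma e_idem: "e * e = e"
proof -
  have "t * t = 0" by (metis f_t mult.assoc mult_zero_right t_f)
  then show ?thesis unfolding e_def by (simp add: algebra_simps f_idem f_t t_f)
qed

lemma principal_right_a_inter_e: "principal_right a \<inter> principal_right e = {0}"
proof -
  have "z = 0" if "z \<in> principal_right a" "z \<in> principal_right e" for z
  proof -
    have fz: "f * z = z" using that(1) f_a_mult unfolding principal_right_def by auto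
    have "e * z = z" using that(2) e_idem unfolding principal_right_def by (auto simp flip: mult.assoc)
    then have "z = - (t * z)" using fz e_f by (metis minus_mult_left mult.assoc)
    then show ?thesis using fz f_t by (metis minus_mult_right mult.assoc mult_zero_left neg_0_equal_iff_equal)
  qed
  moreover have "0 \<in> principal_right a \<inter> principal_right e"
    using rideal_zero[OF rideal_principal_right] by blast
  ultimately show ?thesis by blast
qed

lemma rann_inter_rann_e: "a * y = 0 \<Longrightarrow> e * y = 0 \<Longrightarrow> y = 0"
proof -
  assume ay: "a * y = 0" and ey: "e * y = 0"
  then have y: "y = f * y + t * y" unfolding e_def by (simp add: algebra_simps)
  have "0 = s * (f * y) + s * (t * y)" using s_rann[OF ay] by (subst (asm) y) (simp add: distrib_left)
  moreover have "s * (f * y) = 0" using f_in s_a unfolding principal_right_def by (auto simp flip: mult.assoc)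
  ultimately have "k * y = 0" using s_t by (metis add_0 mult.assoc)
  then have "t * y = 0" using t_k by (metis mult.assoc mult_zero_right)
  then have "f * y = y" using y by simp
  then show "y = 0" using k_left ay \<open>k * y = 0\<close> by simp
qed

text \<open>Decompose b = (ts)b + (1 - ts)b with (1 - ts)b \<in> r(a) + aR; the aR-part is absorbed
  using fb = 0, and tR \<subseteq> e r(a) because t = e(-k) and ak = 0.\<close>
lemma e_image_rann: assumes fb: "f * b = 0" shows "\<exists>r. a * r = 0 \<and> e * r = b"
proof -
  obtain u v where uv: "1 - t * s = u + a * v" and au: "a * u = 0"
    using one_minus_ts unfolding set_plus_r_def rann_def principal_right_def by blast
  have b: "b = t * (s * b) + u * b + a * (v * b)"
    using arg_cong[OF uv, of "\<lambda>z. z * b"] by (simp add: algebra_simps)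
  have "f * (u * b) + a * (v * b) = 0"
    using arg_cong[OF b, of "\<lambda>z. f * z"] fb f_t f_a_mult by (simp add: distrib_left flip: mult.assoc)
  then have "a * (v * b) = - (f * (u * b))" by (metis neg_eq_iff_add_eq_0)
  then have "b = t * (s * b) + u * b - f * (u * b)" using b by simp
  also have "\<dots> = e * (u * b) + t * (u * b + s * b)" unfolding e_def by (simp add: algebra_simps)
  also have "\<dots> = e * (u * b - k * (u * b + s * b))"
    using t_k f_k unfolding e_def by (simp add: algebra_simps flip: mult.assoc)
  finally show ?thesis using au k_rann by (metis mult.assoc mult_zero_left right_diff_distrib mult_zero_right diff_zero)
qed

lemma is_unit_a_minus_e: "is_unit_r (a - e)"
proof -
  obtain x where x: "a * x = f" using f_in unfolding principal_right_def by auto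
  have "f * - (1 - f + e * x * f) = 0"
    using f_e f_idem by (simp add: algebra_simps flip: mult.assoc)
  then obtain r where r: "a * r = 0" "e * r = - (1 - f + e * x * f)"
    using e_image_rann by blast
  show ?thesis
  proof (rule is_unit_rI)
    have "a * (x * f) = f" using x f_idem by (simp flip: mult.assoc)
    then show "(a - e) * (x * f + r) = 1"
      using r by (simp add: algebra_simps)
  next
    fix y assume "(a - e) * y = 0"
    then have "a * y = e * y" by (simp add: algebra_simps)
    then have "a * y \<in> principal_right a \<inter> principal_right e"
      unfolding principal_right_def by blast
    then have "a * y = 0" "e * y = 0"
      using principal_right_a_inter_e \<open>a * y = e * y\<close> by auto
    then show "y = 0" by (rule rann_inter_rann_e)
  qed
qed

lemma special_clean: "special_clean a"
  unfolding special_clean_def using e_idem is_unit_a_minus_e principal_right_a_inter_e by blast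

end

lemma special_clean_dataI:
  fixes a x k s t :: "'r::ring_1"
  defines "f \<equiv> a * x" and "S \<equiv> set_plus_r (rann a) (principal_right a)"
  assumes ax: "a * x * a = a"
    and k: "k \<in> a_rann_sq a" "\<And>z. z \<in> a_rann_sq a \<Longrightarrow> k * z = z" "k * f = k"
    and st: "t * k = t" "s * t = k" "\<And>w. w \<in> S \<Longrightarrow> s * w = 0" "1 - t * s \<in> S"
  shows "special_clean_data a f k s ((1 - f) * t)"
proof
  have K: "a_rann_sq a = {z. f * z = z \<and> a * z = 0}"
    unfolding f_def by (rule a_rann_sq_eq_of_inner_inverse[OF ax])
  show ff: "f * f = f" unfolding f_def using ax by (simp flip: mult.assoc)
  show "f * a = a" unfolding f_def by (rule ax)
  show "f \<in> principal_right a" unfolding f_def principal_right_def by blast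
  show "f * k = k" "a * k = 0" using k(1) unfolding K by blast+
  show "k * f = k" by (rule k(3))
  show "k * z = z" if "f * z = z" "a * z = 0" for z using k(2) that unfolding K by blast
  have aS: "a * y \<in> S" for y
  proof -
    have "a * y \<in> principal_right a" unfolding principal_right_def by blast
    then show ?thesis
      using set_plus_r_subset_right[OF rideal_zero[OF rideal_rann]] unfolding S_def by blast
  qed
  have rS: "y \<in> S" if "a * y = 0" for y
  proof -
    have "y \<in> rann a" using that unfolding rann_def by simp
    then show ?thesis
      using set_plus_r_subset_left[OF rideal_zero[OF rideal_principal_right]] unfolding S_def by blast
  qed
  show "f * ((1 - f) * t) = 0" using ff by (simp add: algebra_simps flip: mult.assoc)
  show "(1 - f) * t * k = (1 - f) * t" using st(1) by (simp add: mult.assoc)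
  have "s * (f * t) = 0" using st(3) aS[of "x * t"] unfolding f_def by (simp add: mult.assoc)
  then show "s * ((1 - f) * t) = k" using st(2) by (simp add: algebra_simps)
  show "s * a = 0" using st(3) aS[of 1] by simp
  show "s * y = 0" if "a * y = 0" for y using st(3) rS[OF that] .
  have "1 - (1 - f) * t * s = (1 - t * s) + a * (x * (t * s))"
    unfolding f_def by (simp add: algebra_simps)
  also have "\<dots> \<in> S"
    using rideal_add[OF _ st(4) aS] rideal_set_plus_r[OF rideal_rann rideal_principal_right]
    unfolding S_def by blast
  finally show "1 - (1 - f) * t * s \<in> set_plus_r (rann a) (principal_right a)"
    unfolding S_def .
qed

theorem lemma3p2:
  fixes a :: "'r::ring_1"
  assumes "regular_elem a"
    and "rprojective (quot_rmod (principal_right a) (a_rann_sq a))"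
    and "rmod_isomorphic (sub_rmod (a_rann_sq a))
           (quot_rmod UNIV (set_plus_r (rann a) (principal_right a)))"
  shows "special_clean a"
proof -
  obtain x where ax: "a * x * a = a" using assms(1) unfolding regular_elem_def by metis
  have K: "a_rann_sq a = {z. a * x * z = z \<and> a * z = 0}"
    by (rule a_rann_sq_eq_of_inner_inverse[OF ax])
  have idem: "a * x * (a * x) = a * x" using ax by (simp flip: mult.assoc)
  have "a_rann_sq a \<subseteq> principal_right (a * x)"
    unfolding K principal_right_def by (smt (verit) mem_Collect_eq subsetI)
  then obtain k where k: "k \<in> a_rann_sq a" "\<And>z. z \<in> a_rann_sq a \<Longrightarrow> k * z = z"
      "k * (a * x) = k"
    using idempotent_generator_of_rprojective_quot[OF idem rideal_a_rann_sq]
      assms(2)[folded principal_right_eq_of_inner_inverse[OF ax]] by metis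
  obtain s t where "t * k = t" "s * t = k"
      "\<And>w. w \<in> set_plus_r (rann a) (principal_right a) \<Longrightarrow> s * w = 0"
      "1 - t * s \<in> set_plus_r (rann a) (principal_right a)"
    using generators_of_iso_quot_univ[OF rideal_a_rann_sq
        rideal_set_plus_r[OF rideal_rann rideal_principal_right] k(1,2) assms(3)] by blast
  from special_clean_dataI[OF ax k this] show ?thesis
    by (rule special_clean_data.special_clean)
qed

end
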